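(* Let $H$ be a connected edge-weighted graph with a $w$-gridtree $\mathcal{T}$. Let $\eta$ and $\eta'$ be columns such that $\eta$ is an ancestor of $\eta'$ in $\mathcal{T}$ and the path between them in $\mathcal{T}$ contains exactly $m$ columns strictly between $\eta$ and $\eta'$. Then every path $P$ in $H$ from a vertex $u\in\eta$ to a vertex $v\in V(H_{\eta'})$ has length at least $m\cdot w$.
   Context: A $w$-gridtree for a connected edge-weighted graph $H$ consists of a partition of $V(H)$ into disjoint subsets, each designated either a column or a leftover set, together with a rooted tree $\mathcal{T}$ whose nodes are in one-to-one correspondence with the columns and whose edges are in one-to-one correspondence with the leftover sets, satisfying: (Column adjacency) For every edge $(u,v)$ of $H$: either $u,v$ lie in the same subset, or $u,v$ lie in columns adjacent in $\mathcal{T}$, or one lies in a column $\eta$ and the other in a leftover set whose edge of $\mathcal{T}$ is incident to $\eta$. (Column width) For a column $\eta$, every other column and every edge of $\mathcal{T}$ is either below $\eta$ (in the subtree of $\mathcal{T}$ rooted at $\eta$; for edges, both endpoints in that subtree) or above $\eta$ (otherwise); a vertex is above/below $\eta$ if its column or leftover set is. If $a\in\eta$ is adjacent in $H$ to a vertex above $\eta$, $b$ is a vertex below $\eta$, and $P$ is a path in $H$ from $a$ to $b$, then $P$ has length at least $w$. (Column shortcut) For a column $\eta$, let $H_\eta$ be the subgraph of $H$ induced by $\eta$, all columns below $\eta$, and all leftover sets below $\eta$ or incident to $\eta$. There is a shortest path $\pi_\eta$ of $H_\eta$ such that every vertex of $\eta$ is within distance $2w$ of $\pi_\eta$ in the induced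 subgraph $H[\eta]$. *)

theory Defs
  imports Complex_Main
begin

definition wgraph :: "'v set \<Rightarrow> ('v \<times> 'v) set \<Rightarrow> ('v \<Rightarrow> 'v \<Rightarrow> real) \<Rightarrow> bool" where
  "wgraph V E wt \<longleftrightarrow> finite V \<and> E \<subseteq> V \<times> V \<and> (\<forall>u v. (u, v) \<in> E \<longrightarrow> (v, u) \<in> E)
     \<and> (\<forall>u. (u, u) \<notin> E) \<and> (\<forall>u v. (u, v) \<in> E \<longrightarrow> wt u v = wt v u \<and> wt u v > 0)"

definition is_path :: "('v \<times> 'v) set \<Rightarrow> 'v set \<Rightarrow> 'v list \<Rightarrow> bool" where
  "is_path E S p \<longleftrightarrow> p \<noteq> [] \<and> set p \<subseteq> S \<and> distinct p
     \<and> (\<forall>i. Suc i < length p \<longrightarrow> (p ! i, p ! Suc i) \<in> E)"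

definition path_len :: "('v \<Rightarrow> 'v \<Rightarrow> real) \<Rightarrow> 'v list \<Rightarrow> real" where
  "path_len wt p = (\<Sum>i<length p - 1. wt (p ! i) (p ! Suc i))"

definition connected_graph :: "'v set \<Rightarrow> ('v \<times> 'v) set \<Rightarrow> bool" where
  "connected_graph V E \<longleftrightarrow> (\<forall>u\<in>V. \<forall>v\<in>V. \<exists>p. is_path E V p \<and> hd p = u \<and> last p = v)"

text \<open>The rooted tree \<T> has node set N (indexed by an abstract type), root r and
parent function par (with par r = r).  The tree edges are
the pairs (c, par c) for c \<in> N - {r}; the leftover set of that edge is lo c.\<close>

definition rooted_tree :: "'n set \<Rightarrow> ('n \<Rightarrow> 'n) \<Rightarrow> 'n \<Rightarrow> bool" where
  "rooted_tree N par r \<longleftrightarrow> finite N \<and> r \<in> N \<and> par r = r \<and> (\<forall>c\<in>N. par c \<in> N)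
     \<and> (\<forall>c\<in>N. \<exists>k. (par ^^ k) c = r)"

definition desc :: "('n \<Rightarrow> 'n) \<Rightarrow> 'n \<Rightarrow> 'n \<Rightarrow> bool" where
  "desc par n c \<longleftrightarrow> (\<exists>k. (par ^^ k) c = n)"

text \<open>Vertex x is below column n: it lies in a column strictly below n, or in the
leftover set of a tree edge (c, par c) with both endpoints in the subtree of n,
i.e. c a strict descendant of n.\<close>
definition below_v :: "'n set \<Rightarrow> ('n \<Rightarrow> 'n) \<Rightarrow> 'n \<Rightarrow> ('n \<Rightarrow> 'v set) \<Rightarrow> ('n \<Rightarrow> 'v set)
    \<Rightarrow> 'n \<Rightarrow> 'v \<Rightarrow> bool" where
  "below_v N par r col lo n x \<longleftrightarrow>
     (\<exists>c\<in>N. c \<noteq> n \<and> desc par n c \<and> x \<in> col c)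
   \<or> (\<exists>c\<in>N - {r}. c \<noteq> n \<and> desc par n c \<and> x \<in> lo c)"

definition above_v :: "'n set \<Rightarrow> ('n \<Rightarrow> 'n) \<Rightarrow> 'n \<Rightarrow> ('n \<Rightarrow> 'v set) \<Rightarrow> ('n \<Rightarrow> 'v set)
    \<Rightarrow> 'n \<Rightarrow> 'v \<Rightarrow> bool" where
  "above_v N par r col lo n x \<longleftrightarrow>
     (\<exists>c\<in>N. c \<noteq> n \<and> \<not> desc par n c \<and> x \<in> col c)
   \<or> (\<exists>c\<in>N - {r}. \<not> (c \<noteq> n \<and> desc par n c) \<and> x \<in> lo c)"

text \<open>Vertex set of H_\<eta>: the column n, all columns below n, all leftover sets below n
and the leftover sets of tree edges incident to n (the edge to the parent; edges to
children are below n anyway).\<close>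
definition sub_vs :: "'n set \<Rightarrow> ('n \<Rightarrow> 'n) \<Rightarrow> 'n \<Rightarrow> ('n \<Rightarrow> 'v set) \<Rightarrow> ('n \<Rightarrow> 'v set)
    \<Rightarrow> 'n \<Rightarrow> 'v set" where
  "sub_vs N par r col lo n =
     (\<Union>c\<in>{c\<in>N. desc par n c}. col c) \<union> (\<Union>c\<in>{c\<in>N - {r}. desc par n c}. lo c)"

definition gridtree ::
  "'v set \<Rightarrow> ('v \<times> 'v) set \<Rightarrow> ('v \<Rightarrow> 'v \<Rightarrow> real) \<Rightarrow> real
   \<Rightarrow> 'n set \<Rightarrow> ('n \<Rightarrow> 'n) \<Rightarrow> 'n \<Rightarrow> ('n \<Rightarrow> 'v set) \<Rightarrow> ('n \<Rightarrow> 'v set) \<Rightarrow> bool" where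
  "gridtree V E wt w N par r col lo \<longleftrightarrow>
     rooted_tree N par r
     \<comment> \<open>partition of V into the columns and the leftover sets\<close>
   \<and> V = (\<Union>c\<in>N. col c) \<union> (\<Union>c\<in>N - {r}. lo c)
   \<and> (\<forall>c\<in>N. \<forall>d\<in>N. c \<noteq> d \<longrightarrow> col c \<inter> col d = {})
   \<and> (\<forall>c\<in>N - {r}. \<forall>d\<in>N - {r}. c \<noteq> d \<longrightarrow> lo c \<inter> lo d = {})
   \<and> (\<forall>c\<in>N. \<forall>d\<in>N - {r}. col c \<inter> lo d = {})
     \<comment> \<open>column adjacency\<close>
   \<and> (\<forall>u v. (u, v) \<in> E \<longrightarrow>
         (\<exists>c\<in>N. u \<in> col c \<and> v \<in> col c)
       \<or> (\<exists>c\<in>N - {r}. u \<in> lo c \<and> v \<in> lo c)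
       \<or> (\<exists>c\<in>N - {r}. (u \<in> col c \<and> v \<in> col (par c)) \<or> (v \<in> col c \<and> u \<in> col (par c)))
       \<or> (\<exists>c\<in>N - {r}. \<exists>d\<in>{c, par c}. (u \<in> col d \<and> v \<in> lo c) \<or> (v \<in> col d \<and> u \<in> lo c)))
     \<comment> \<open>column width\<close>
   \<and> (\<forall>n\<in>N. \<forall>a\<in>col n. \<forall>x b p.
         (a, x) \<in> E \<and> above_v N par r col lo n x \<and> below_v N par r col lo n b
         \<and> is_path E V p \<and> hd p = a \<and> last p = b \<longrightarrow> path_len wt p \<ge> w)
     \<comment> \<open>column shortcut\<close>
   \<and> (\<forall>n\<in>N. \<exists>\<pi>. is_path E (sub_vs N par r col lo n) \<pi>
         \<and> (\<forall>p. is_path E (sub_vs N par r col lo n) p \<and> hd p = hd \<pi> \<and> last p = last \<pi>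
               \<longrightarrow> path_len wt \<pi> \<le> path_len wt p)
         \<and> (\<forall>x\<in>col n. \<exists>q. is_path E (col n) q \<and> hd q = x \<and> last q \<in> set \<pi>
               \<and> path_len wt q \<le> 2 * w))"

end

theory Submission
  imports Defs
begin

text \<open>Let \<open>c\<^sub>1, \<dots>, c\<^sub>m\<close> be the columns strictly between \<open>\<eta>'\<close> and \<open>\<eta>\<close>. Each \<open>c\<^sub>j\<close> is a
proper descendant of \<open>\<eta>\<close> and a proper ancestor of \<open>\<eta>'\<close>, so \<open>u\<close> lies above \<open>c\<^sub>j\<close> and all of
\<open>H\<^sub>\<eta>'\<close> lies below it. No edge joins a vertex above a column to one below it, so between
its last vertex above \<open>c\<^sub>j\<close> and its first vertex below, \<open>P\<close> runs through \<open>c\<^sub>j\<close>; by column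
width this stretch, made of edges leaving \<open>c\<^sub>j\<close>, has length at least \<open>w\<close>. The columns are
disjoint, so the \<open>m\<close> stretches use disjoint edges of \<open>P\<close>.\<close>

lemma funpow_add_apply: "(f ^^ m) ((f ^^ n) x) = (f ^^ (m + n)) x"
  by (simp add: funpow_add)

lemma desc_funpow: "desc par ((par ^^ k) c) c"
  unfolding desc_def by blast

lemma desc_par: "desc par (par c) c"
  using desc_funpow[of par 1] by simp

lemma desc_trans: "desc par a b \<Longrightarrow> desc par b c \<Longrightarrow> desc par a c"
  unfolding desc_def by (metis funpow_add_apply)

context
  fixes N :: "'n set" and par :: "'n \<Rightarrow> 'n" and r :: 'n
  assumes tree: "rooted_tree N par r"
begin

lemma par_root: "par r = r"
  using tree unfolding rooted_tree_def by blast

lemma funpow_par_root: "(par ^^ k) r = r"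
  by (induction k) (simp_all add: par_root)

lemma funpow_par_in: "x \<in> N \<Longrightarrow> (par ^^ k) x \<in> N"
  using tree unfolding rooted_tree_def by (induction k) auto

lemma periodic_node_eq_root:
  assumes x: "x \<in> N" and period: "(par ^^ Suc p) x = x"
  shows "x = r"
proof -
  obtain k where k: "(par ^^ k) x = r"
    using tree x unfolding rooted_tree_def by blast
  have "((par ^^ Suc p) ^^ k) x = x"
    using period by (induction k) simp_all
  then have "x = (par ^^ (Suc p * k - k + k)) x"
    by (simp only: funpow_mult) (simp add: add.commute)
  also have "\<dots> = r"
    using k by (simp add: funpow_par_root flip: funpow_add_apply)
  finally show ?thesis .
qed

lemma desc_antisym:
  assumes "a \<in> N" "desc par a b" "desc par b a"
  shows "a = b"
proof -
  obtain k l where k: "(par ^^ k) b = a" and l: "(par ^^ l) a = b"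
    using assms(2,3) unfolding desc_def by blast
  then have a: "(par ^^ (k + l)) a = a"
    by (simp add: funpow_add)
  show ?thesis
  proof (cases "k + l")
    case 0
    then show ?thesis using l by simp
  next
    case (Suc p)
    then have "a = r" using periodic_node_eq_root[OF assms(1)] a by simp
    then show ?thesis using l by (simp add: funpow_par_root)
  qed
qed

lemma strict_desc_iff_desc_par:
  assumes "c \<in> N" "c \<noteq> r"
  shows "(c \<noteq> a \<and> desc par a c) \<longleftrightarrow> desc par a (par c)"
proof
  assume "c \<noteq> a \<and> desc par a c"
  then obtain k where "(par ^^ Suc k) c = a"
    unfolding desc_def by (metis funpow_0 not0_implies_Suc)
  then show "desc par a (par c)"
    unfolding desc_def by (metis funpow_Suc_right comp_apply)
next
  assume "desc par a (par c)"
  then obtain k where k: "(par ^^ Suc k) c = a"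
    unfolding desc_def by (metis funpow_Suc_right comp_apply)
  have "c \<noteq> a"
    using k periodic_node_eq_root[OF assms(1)] assms(2) by blast
  with k show "c \<noteq> a \<and> desc par a c"
    unfolding desc_def by blast
qed

lemma inj_on_funpow_par:
  assumes x: "x \<in> N" and avoid: "\<forall>j\<le>m. (par ^^ j) x \<noteq> (par ^^ Suc m) x"
  shows "inj_on (\<lambda>j. (par ^^ j) x) {..m}"
proof (rule linorder_inj_onI')
  fix i j assume ij: "i \<in> {..m}" "j \<in> {..m}" "i < j"
  show "(par ^^ i) x \<noteq> (par ^^ j) x"
  proof
    assume eq: "(par ^^ i) x = (par ^^ j) x"
    have "(par ^^ Suc (j - i - 1)) ((par ^^ i) x) = (par ^^ j) x"
      using ij(3) by (simp only: funpow_add_apply) simp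
    then have "(par ^^ i) x = r"
      using periodic_node_eq_root[OF funpow_par_in[OF x]] eq by simp
    moreover have "(par ^^ Suc m) x = (par ^^ (Suc m - i)) ((par ^^ i) x)"
      using ij(1) by (simp add: funpow_add_apply)
    ultimately show False
      using avoid ij(1) by (simp add: funpow_par_root)
  qed
qed

end

lemma is_path_slice:
  assumes P: "is_path E S P" and ij: "i \<le> j" "j < length P"
  shows "is_path E S (take (Suc j - i) (drop i P))"
    and "hd (take (Suc j - i) (drop i P)) = P ! i"
    and "last (take (Suc j - i) (drop i P)) = P ! j"
proof -
  let ?Q = "take (Suc j - i) (drop i P)"
  have len: "length ?Q = Suc j - i" and nth: "\<And>k. k < Suc j - i \<Longrightarrow> ?Q ! k = P ! (i + k)"
    using ij by auto
  show "is_path E S ?Q"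
    unfolding is_path_def
  proof (intro conjI allI impI)
    show "?Q \<noteq> []" "distinct ?Q"
      using P ij unfolding is_path_def by auto
    show "set ?Q \<subseteq> S"
      using P unfolding is_path_def by (meson order.trans set_drop_subset set_take_subset)
    fix k assume k: "Suc k < length ?Q"
    then have "(P ! (i + k), P ! Suc (i + k)) \<in> E"
      using P len ij unfolding is_path_def by auto
    then show "(?Q ! k, ?Q ! Suc k) \<in> E"
      using k ij by simp
  qed
  show "hd ?Q = P ! i"
    using ij by (simp add: hd_take hd_drop_conv_nth)
  show "last ?Q = P ! j"
    using len nth[of "j - i"] ij by (simp add: last_conv_nth)
qed

lemma path_len_slice:
  assumes ij: "i \<le> j" "j < length P"
  shows "path_len wt (take (Suc j - i) (drop i P)) = (\<Sum>k = i..<j. wt (P ! k) (P ! Suc k))"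
  unfolding path_len_def sum.atLeastLessThan_shift_0[of _ i j]
  using ij by (intro sum.cong) auto

lemma path_edge_sum_mono:
  assumes G: "wgraph V E wt" and P: "is_path E S P" and KK: "K \<subseteq> K'" "K' \<subseteq> {..<length P - 1}"
  shows "(\<Sum>k\<in>K. wt (P ! k) (P ! Suc k)) \<le> (\<Sum>k\<in>K'. wt (P ! k) (P ! Suc k))"
proof (rule sum_mono2)
  show "finite K'"
    using KK(2) finite_subset by blast
  fix k assume "k \<in> K' - K"
  then have "(P ! k, P ! Suc k) \<in> E"
    using P KK(2) unfolding is_path_def by auto
  then show "0 \<le> wt (P ! k) (P ! Suc k)"
    using G unfolding wgraph_def by (meson less_le)
qed (use KK in blast)

lemma last_before_first_crossing:
  fixes A B :: "nat \<Rightarrow> bool"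
  assumes "A i" "B t" "i < t"
  shows "\<exists>i' t'. i \<le> i' \<and> i' < t' \<and> t' \<le> t \<and> A i' \<and> B t'
           \<and> (\<forall>k. i' < k \<longrightarrow> k < t' \<longrightarrow> \<not> A k \<and> \<not> B k)"
  using assms
proof (induction "t - i" arbitrary: i t rule: less_induct)
  case less
  show ?case
  proof (cases "\<exists>k. i < k \<and> k < t \<and> (A k \<or> B k)")
    case True
    then obtain k where k: "i < k" "k < t" "A k \<or> B k"
      by blast
    then show ?thesis
    proof (elim disjE)
      assume "A k"
      have "t - k < t - i"
        using k by simp
      from less.hyps[OF this \<open>A k\<close> less.prems(2) k(2)] k(1) show ?thesis
        by (meson less_imp_le order.trans)
    next
      assume "B k"
      have "k - i < t - i"
        using k by simp
      from less.hyps[OF this less.prems(1) \<open>B k\<close> k(1)] k(2) show ?thesis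
        by (meson less_imp_le order.trans)
    qed
  next
    case False
    then show ?thesis
      using less.prems by blast
  qed
qed

context
  fixes V :: "'v set" and E :: "('v \<times> 'v) set" and wt :: "'v \<Rightarrow> 'v \<Rightarrow> real" and w :: real
    and N :: "'n set" and par :: "'n \<Rightarrow> 'n" and r :: 'n and col lo :: "'n \<Rightarrow> 'v set"
  assumes grid: "gridtree V E wt w N par r col lo"
begin

lemma gridtree_rooted_tree: "rooted_tree N par r"
  using grid unfolding gridtree_def by blast

lemma
  assumes "c \<in> N" "x \<in> col c"
  shows above_v_col_iff: "above_v N par r col lo a x \<longleftrightarrow> c \<noteq> a \<and> \<not> desc par a c"
    and below_v_col_iff: "below_v N par r col lo a x \<longleftrightarrow> c \<noteq> a \<and> desc par a c"
proof -
  have "\<And>d. d \<in> N \<Longrightarrow> x \<in> col d \<Longrightarrow> d = c" "\<And>d. d \<in> N - {r} \<Longrightarrow> x \<notin> lo d"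
    using grid assms unfolding gridtree_def by blast+
  then show "above_v N par r col lo a x \<longleftrightarrow> c \<noteq> a \<and> \<not> desc par a c"
    and "below_v N par r col lo a x \<longleftrightarrow> c \<noteq> a \<and> desc par a c"
    using assms unfolding above_v_def below_v_def by metis+
qed

lemma
  assumes c: "c \<in> N - {r}" and x: "x \<in> lo c"
  shows above_v_lo_iff: "above_v N par r col lo a x \<longleftrightarrow> \<not> desc par a (par c)"
    and below_v_lo_iff: "below_v N par r col lo a x \<longleftrightarrow> desc par a (par c)"
proof -
  have "\<And>d. d \<in> N - {r} \<Longrightarrow> x \<in> lo d \<Longrightarrow> d = c" "\<And>d. d \<in> N \<Longrightarrow> x \<notin> col d"
    using grid c x unfolding gridtree_def by blast+
  moreover have "(c \<noteq> a \<and> desc par a c) \<longleftrightarrow> desc par a (par c)"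
    using strict_desc_iff_desc_par[OF gridtree_rooted_tree] c by blast
  ultimately show "above_v N par r col lo a x \<longleftrightarrow> \<not> desc par a (par c)"
    and "below_v N par r col lo a x \<longleftrightarrow> desc par a (par c)"
    using c x unfolding above_v_def below_v_def by metis+
qed

lemma not_above_v_and_below_v:
  assumes "above_v N par r col lo a x" "below_v N par r col lo a x"
  shows False
  using assms(1) unfolding above_v_def
proof (elim disjE bexE conjE)
  fix c assume "c \<in> N" "x \<in> col c"
  then show False
    using assms above_v_col_iff below_v_col_iff by blast
next
  fix c assume "c \<in> N - {r}" "x \<in> lo c"
  then show False
    using assms above_v_lo_iff below_v_lo_iff by blast
qed

lemma mem_col_if_not_above_v_below_v:
  assumes "x \<in> V" "\<not> above_v N par r col lo a x" "\<not> below_v N par r col lo a x"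
  shows "x \<in> col a"
proof -
  have "V = (\<Union>c\<in>N. col c) \<union> (\<Union>c\<in>N - {r}. lo c)"
    using grid unfolding gridtree_def by blast
  then show ?thesis
    using assms unfolding above_v_def below_v_def by auto
qed

lemma no_edge_above_v_below_v:
  assumes e: "(x, y) \<in> E"
    and x: "above_v N par r col lo a x" and y: "below_v N par r col lo a y"
  shows False
proof -
  have tree: "rooted_tree N par r"
    by (rule gridtree_rooted_tree)
  have parN: "\<And>c. c \<in> N \<Longrightarrow> par c \<in> N"
    using tree unfolding rooted_tree_def by blast
  have up: "desc par a (par c) \<Longrightarrow> desc par a c" for c
    using desc_trans desc_par by metis
  have down: "c \<in> N - {r} \<Longrightarrow> c \<noteq> a \<Longrightarrow> desc par a c \<Longrightarrow> desc par a (par c)" for c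
    using strict_desc_iff_desc_par[OF tree] by blast
  have "(\<exists>c\<in>N. x \<in> col c \<and> y \<in> col c)
       \<or> (\<exists>c\<in>N - {r}. x \<in> lo c \<and> y \<in> lo c)
       \<or> (\<exists>c\<in>N - {r}. (x \<in> col c \<and> y \<in> col (par c)) \<or> (y \<in> col c \<and> x \<in> col (par c)))
       \<or> (\<exists>c\<in>N - {r}. \<exists>d\<in>{c, par c}. (x \<in> col d \<and> y \<in> lo c) \<or> (y \<in> col d \<and> x \<in> lo c))"
    using grid e unfolding gridtree_def by blast
  then show False
  proof (elim disjE bexE conjE)
    fix c assume "c \<in> N" "x \<in> col c" "y \<in> col c"
    then show False
      using x y above_v_col_iff below_v_col_iff by blast
  next
    fix c assume "c \<in> N - {r}" "x \<in> lo c" "y \<in> lo c"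
    then show False
      using x y above_v_lo_iff below_v_lo_iff by blast
  next
    fix c assume "c \<in> N - {r}" "x \<in> col c" "y \<in> col (par c)"
    then show False
      using x y above_v_col_iff[of c x a] below_v_col_iff[of "par c" y a] parN up by blast
  next
    fix c assume "c \<in> N - {r}" "y \<in> col c" "x \<in> col (par c)"
    then show False
      using x y above_v_col_iff[of "par c" x a] below_v_col_iff[of c y a] parN down by blast
  next
    fix c d assume "c \<in> N - {r}" "d \<in> {c, par c}" "x \<in> col d" "y \<in> lo c"
    then show False
      using x y above_v_col_iff[of d x a] below_v_lo_iff[of c y a] parN up by blast
  next
    fix c d assume "c \<in> N - {r}" "d \<in> {c, par c}" "y \<in> col d" "x \<in> lo c"
    then show False
      using x y below_v_col_iff[of d y a] above_v_lo_iff[of c x a] parN down by blast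
  qed
qed

lemma col_edge_weight_ge_width:
  assumes G: "wgraph V E wt" and a: "a \<in> N" and P: "is_path E V P"
    and hd: "above_v N par r col lo a (hd P)" and last: "below_v N par r col lo a (last P)"
  shows "w \<le> (\<Sum>k | Suc k < length P \<and> P ! k \<in> col a. wt (P ! k) (P ! Suc k))"
proof -
  let ?above = "\<lambda>k. above_v N par r col lo a (P ! k)"
  let ?below = "\<lambda>k. below_v N par r col lo a (P ! k)"
  define L where "L = length P"
  have "P \<noteq> []" and PV: "set P \<subseteq> V" and Pedge: "\<And>k. Suc k < L \<Longrightarrow> (P ! k, P ! Suc k) \<in> E"
    using P unfolding is_path_def L_def by auto
  then have "?above 0" "?below (L - 1)"
    using hd last by (simp_all add: hd_conv_nth last_conv_nth L_def)
  moreover have "0 < L - 1"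
    using calculation not_above_v_and_below_v by (metis neq0_conv)
  ultimately obtain i t where it: "i < t" "t \<le> L - 1" "?above i" "?below t"
    and between: "\<And>k. i < k \<Longrightarrow> k < t \<Longrightarrow> \<not> ?above k \<and> \<not> ?below k"
    using last_before_first_crossing[of ?above 0 ?below "L - 1"] by blast
  have "Suc i \<noteq> t"
    using Pedge[of i] it no_edge_above_v_below_v by force
  with it have it': "Suc i < t" "t < L"
    using \<open>P \<noteq> []\<close> by (auto simp: L_def)
  have inside: "P ! k \<in> col a" if "i < k" "k < t" for k
    using mem_col_if_not_above_v_below_v between[OF that] PV that it' nth_mem
    unfolding L_def by (metis less_trans subsetD)
  let ?Q = "take (Suc t - Suc i) (drop (Suc i) P)"
  have "(P ! Suc i, P ! i) \<in> E"
    using Pedge[of i] it' G unfolding wgraph_def by auto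
  moreover have "is_path E V ?Q" "hd ?Q = P ! Suc i" "last ?Q = P ! t"
    using is_path_slice[OF P, of "Suc i" t] it' by (auto simp: L_def)
  ultimately have "w \<le> path_len wt ?Q"
    using grid a inside[of "Suc i"] it it' unfolding gridtree_def by blast
  also have "\<dots> = (\<Sum>k = Suc i..<t. wt (P ! k) (P ! Suc k))"
    using path_len_slice[of "Suc i" t P wt] it' by (simp add: L_def)
  also have "\<dots> \<le> (\<Sum>k | Suc k < length P \<and> P ! k \<in> col a. wt (P ! k) (P ! Suc k))"
    using inside it' unfolding L_def by (intro path_edge_sum_mono[OF G P]) auto
  finally show ?thesis .
qed

lemma path_len_ge_card_mul_width:
  assumes G: "wgraph V E wt" and P: "is_path E V P" and C: "C \<subseteq> N"
    and crosses: "\<And>a. a \<in> C \<Longrightarrow> above_v N par r col lo a (hd P) \<and> below_v N par r col lo a (last P)"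
  shows "real (card C) * w \<le> path_len wt P"
proof -
  define K where "K a = {k. Suc k < length P \<and> P ! k \<in> col a}" for a
  define f where "f k = wt (P ! k) (P ! Suc k)" for k
  have "finite C"
    using gridtree_rooted_tree C finite_subset unfolding rooted_tree_def by blast
  have "real (card C) * w = (\<Sum>a\<in>C. w)"
    by simp
  also have "\<dots> \<le> (\<Sum>a\<in>C. sum f (K a))"
    using col_edge_weight_ge_width[OF G _ P] crosses C unfolding K_def f_def
    by (intro sum_mono) blast
  also have "\<dots> = sum f (\<Union>a\<in>C. K a)"
  proof (rule sum.UNION_disjoint[symmetric])
    show "finite C" by fact
    show "\<forall>a\<in>C. finite (K a)"
      unfolding K_def by (auto intro: finite_subset[of _ "{..<length P}"])
    have "\<forall>c\<in>N. \<forall>d\<in>N. c \<noteq> d \<longrightarrow> col c \<inter> col d = {}"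
      using grid unfolding gridtree_def by blast
    then show "\<forall>a\<in>C. \<forall>b\<in>C. a \<noteq> b \<longrightarrow> K a \<inter> K b = {}"
      using C unfolding K_def by blast
  qed
  also have "\<dots> \<le> sum f {..<length P - 1}"
    unfolding f_def K_def by (intro path_edge_sum_mono[OF G P]) auto
  also have "\<dots> = path_len wt P"
    unfolding path_len_def f_def by simp
  finally show ?thesis .
qed

lemma above_v_col_of_strict_desc:
  assumes n: "n \<in> N" and u: "u \<in> col n" and a: "desc par n a" "a \<noteq> n"
  shows "above_v N par r col lo a u"
  using above_v_col_iff[OF n u] desc_antisym[OF gridtree_rooted_tree n] a by blast

lemma below_v_sub_vs_of_strict_ancestor:
  assumes a: "a \<in> N" "desc par a n" "a \<noteq> n" and v: "v \<in> sub_vs N par r col lo n"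
  shows "below_v N par r col lo a v"
proof -
  have "d \<noteq> a \<and> desc par a d" if "desc par n d" for d
    using that a desc_trans desc_antisym[OF gridtree_rooted_tree a(1)] by metis
  then show ?thesis
    using v unfolding sub_vs_def below_v_def by blast
qed

end

theorem claim5p2:
  fixes V :: "'v set" and E :: "('v \<times> 'v) set" and wt :: "'v \<Rightarrow> 'v \<Rightarrow> real" and w :: real
    and N :: "'n set" and par :: "'n \<Rightarrow> 'n" and r :: 'n and col lo :: "'n \<Rightarrow> 'v set"
    and n n' :: 'n and m :: nat and u v :: 'v and P :: "'v list"
  assumes "wgraph V E wt"
    and "connected_graph V E"
    and "gridtree V E wt w N par r col lo"
    and "n \<in> N" and "n' \<in> N"
    and "(par ^^ Suc m) n' = n"
    and "\<forall>j\<le>m. (par ^^ j) n' \<noteq> n"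
    and "u \<in> col n"
    and "v \<in> sub_vs N par r col lo n'"
    and "is_path E V P" and "hd P = u" and "last P = v"
  shows "path_len wt P \<ge> real m * w"
proof -
  note grid = assms(3)
  have tree: "rooted_tree N par r"
    using gridtree_rooted_tree[OF grid] .
  define c where "c j = (par ^^ j) n'" for j
  have inj: "inj_on c {..m}"
    using inj_on_funpow_par[OF tree assms(5)] assms(6,7) unfolding c_def by simp
  have crosses: "above_v N par r col lo (c j) u \<and> below_v N par r col lo (c j) v"
    if j: "j \<in> {1..m}" for j
  proof -
    have cj: "c j \<in> N"
      using funpow_par_in[OF tree assms(5)] unfolding c_def .
    have "n = (par ^^ (Suc m - j)) (c j)"
      using assms(6) j unfolding c_def by (simp add: funpow_add_apply)
    then have "desc par n (c j)" "c j \<noteq> n"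
      using desc_funpow assms(7) j unfolding c_def by auto
    moreover have "desc par (c j) n'" "c j \<noteq> n'"
      using desc_funpow inj_onD[OF inj, of j 0] j unfolding c_def by auto
    ultimately show ?thesis
      using above_v_col_of_strict_desc[OF grid assms(4,8)]
        below_v_sub_vs_of_strict_ancestor[OF grid cj _ _ assms(9)] by blast
  qed
  have "inj_on c {1..m}"
    using inj by (rule inj_on_subset) auto
  then have card: "card (c ` {1..m}) = m"
    by (simp add: card_image)
  have "c ` {1..m} \<subseteq> N"
    using funpow_par_in[OF tree assms(5)] unfolding c_def by blast
  then have "real (card (c ` {1..m})) * w \<le> path_len wt P"
    using crosses assms(11,12) by (intro path_len_ge_card_mul_width[OF grid assms(1,10)]) auto
  with card show ?thesis
    by simp
qed

end
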